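(* For every $n\ge 10$ there exist a set $S$ of pairwise non-isomorphic graphs, each with at most $n$ vertices, a concept $c:S\to\{0,1\}$, and a graph $F$ such that, with $\mathcal{F}=\{F\}$: (1) the graphs in $S$ are pairwise distinguished by $1$-WL after one round; (2) for every $T\ge 0$, the sample $\{(\overline{\phi^{(T)}_{\mathsf{WL}}}(G),c(G)):G\in S\}$ is not linearly separable; (3) for every $T\ge 0$, the sample $\{(\overline{\phi^{(T)}_{\mathsf{WL},\mathcal{F}}}(G),c(G)):G\in S\}$ is linearly separable. Moreover, (2) and (3) also hold with the unnormalised feature vectors $\phi^{(T)}_{\mathsf{WL}}$ and $\phi^{(T)}_{\mathsf{WL},\mathcal{F}}$.
   Context: Graphs are finite, simple, undirected, unlabeled. $1$-WL: $C^1_0$ constant, $C^1_t(v)=\mathsf{RELABEL}(C^1_{t-1}(v),\{\!\{C^1_{t-1}(u):u\in N(v)\}\!\})$ with a fixed injective $\mathsf{RELABEL}$ shared by all graphs; $1$-WL distinguishes two graphs after one round if for some round $s\le1$ some colour occurs a different number of times in them. $1$-WL$_{\mathcal{F}}$: same update with initial colour $(\ell_F(v))_{F\in\mathcal{F}}$, where $\ell_F(v)=1$ if $v$ lies in a vertex set $X$ with induced subgraph $G[X]$ isomorphic to $F$, else $0$. $\phi_t(G)$ (resp. $\phi_{\mathcal{F},t}(G)$) counts the vertices of $G$ of each colour occurring at round $t$ among the graphs of $S$; $\phi^{(T)}_{\mathsf{WL}}(G)=[\phi_0(G),\dots,\phi_T(G)]$, $\phi^{(T)}_{\mathsf{WL},\mathcal{F}}(G)=[\phi_{\mathcal{F},0}(G),\dots,\phi_{\mathcal{F},T}(G)]$;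 a bar denotes normalisation to unit Euclidean norm. A labelled set of vectors is linearly separable if there are $\mathbf{w},b$ with $\mathbf{w}^\top\mathbf{x}+b>0$ for label $1$ and $<0$ for label $0$. *)

theory Defs
  imports Complex_Main "HOL-Library.Multiset"
begin

text \<open>A finite simple undirected graph with vertex set {0..<k} and
  symmetric irreflexive adjacency relation E (false outside the vertex set).\<close>
type_synonym graph = "nat \<times> (nat \<Rightarrow> nat \<Rightarrow> bool)"

definition wf_graph :: "graph \<Rightarrow> bool" where
  "wf_graph G \<longleftrightarrow> (\<forall>u v. snd G u v \<longrightarrow> u < fst G \<and> v < fst G)
     \<and> (\<forall>u v. snd G u v \<longrightarrow> snd G v u) \<and> (\<forall>v. \<not> snd G v v)"

definition graph_iso :: "graph \<Rightarrow> graph \<Rightarrow> bool" where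
  "graph_iso G H \<longleftrightarrow> (\<exists>f. bij_betw f {..<fst G} {..<fst H}
     \<and> (\<forall>a<fst G. \<forall>b<fst G. snd G a b \<longleftrightarrow> snd H (f a) (f b)))"

definition in_induced_copy :: "graph \<Rightarrow> graph \<Rightarrow> nat \<Rightarrow> bool" where
  "in_induced_copy F G v \<longleftrightarrow> (\<exists>X. X \<subseteq> {..<fst G} \<and> v \<in> X \<and>
     (\<exists>f. bij_betw f {..<fst F} X
        \<and> (\<forall>a<fst F. \<forall>b<fst F. snd F a b \<longleftrightarrow> snd G (f a) (f b))))"

text \<open>WL colours: the free constructor Step plays the role of the injective RELABEL.\<close>
datatype 'a wlcol = Init 'a | Step "'a wlcol" "'a wlcol multiset"

fun wl_col :: "(graph \<Rightarrow> nat \<Rightarrow> 'a) \<Rightarrow> graph \<Rightarrow> nat \<Rightarrow> nat \<Rightarrow> 'a wlcol" where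
  "wl_col init G 0 v = Init (init G v)"
| "wl_col init G (Suc t) v = Step (wl_col init G t v)
     (image_mset (wl_col init G t) (mset_set {u. u < fst G \<and> snd G v u}))"

definition wl1 :: "graph \<Rightarrow> nat \<Rightarrow> nat \<Rightarrow> unit wlcol" where
  "wl1 = wl_col (\<lambda>_ _. ())"

definition wlF :: "graph list \<Rightarrow> graph \<Rightarrow> nat \<Rightarrow> nat \<Rightarrow> nat list wlcol" where
  "wlF Fs = wl_col (\<lambda>G v. map (\<lambda>F. if in_induced_copy F G v then 1 else 0) Fs)"

definition col_count :: "(graph \<Rightarrow> nat \<Rightarrow> nat \<Rightarrow> 'c) \<Rightarrow> graph \<Rightarrow> nat \<Rightarrow> 'c \<Rightarrow> nat" where
  "col_count col G t c = card {v. v < fst G \<and> col G t v = c}"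

definition colours_at :: "(graph \<Rightarrow> nat \<Rightarrow> nat \<Rightarrow> 'c) \<Rightarrow> graph set \<Rightarrow> nat \<Rightarrow> 'c set" where
  "colours_at col S t = {col G t v | G v. G \<in> S \<and> v < fst G}"

text \<open>Coordinates of the concatenated feature vector [phi_0, ..., phi_T].\<close>
definition feat_idx :: "(graph \<Rightarrow> nat \<Rightarrow> nat \<Rightarrow> 'c) \<Rightarrow> graph set \<Rightarrow> nat \<Rightarrow> (nat \<times> 'c) set" where
  "feat_idx col S T = {(t, c). t \<le> T \<and> c \<in> colours_at col S t}"

definition phi :: "(graph \<Rightarrow> nat \<Rightarrow> nat \<Rightarrow> 'c) \<Rightarrow> graph \<Rightarrow> nat \<times> 'c \<Rightarrow> real" where
  "phi col G i = real (col_count col G (fst i) (snd i))"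

definition normalise :: "'i set \<Rightarrow> ('i \<Rightarrow> real) \<Rightarrow> 'i \<Rightarrow> real" where
  "normalise I x i = x i / sqrt (\<Sum>j\<in>I. (x j)^2)"

definition lin_separable :: "'i set \<Rightarrow> 'g set \<Rightarrow> ('g \<Rightarrow> 'i \<Rightarrow> real) \<Rightarrow> ('g \<Rightarrow> nat) \<Rightarrow> bool" where
  "lin_separable I S x c \<longleftrightarrow> (\<exists>w b. \<forall>G\<in>S.
     (c G = 1 \<longrightarrow> (\<Sum>i\<in>I. w i * x G i) + b > 0) \<and>
     (c G = 0 \<longrightarrow> (\<Sum>i\<in>I. w i * x G i) + b < 0))"

definition wl_dist_one_round :: "graph \<Rightarrow> graph \<Rightarrow> bool" where
  "wl_dist_one_round G H \<longleftrightarrow> (\<exists>s\<le>1. \<exists>c. col_count wl1 G s c \<noteq> col_count wl1 H s c)"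

end

theory Submission
  imports Defs
begin

text \<open>Take the four graphs 3K2 + K3, 6K1 + K3, 3K1 + C6 and 3K1 + 3K2 on nine vertices, labelled
  by whether they contain a triangle. In each of them adjacent vertices have equal degree, so 1-WL
  never refines the partition by degrees, and every colour count is a count of vertices of a
  given degree. The degree histograms (0, 6, 3), (6, 0, 3), (3, 0, 6), (3, 6, 0) are pairwise
  different, so the graphs are non-isomorphic and are told apart after one round; but the first
  two add up to the same vector as the last two, and all four feature vectors have the same
  norm, so no hyperplane puts the first pair strictly on one side and the second pair on the
  other. With the triangle as pattern, the initial colour marks the vertices on a triangle, and
  the hyperplane 3 x1 - x0 = 0 separates; since it passes through the origin, it also separates
  the normalised vectors.\<close>

section \<open>Degrees and 1-WL colours\<close>

definition degree :: "graph \<Rightarrow> nat \<Rightarrow> nat" where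
  "degree G v = card {u. u < fst G \<and> snd G v u}"

definition degree_count :: "graph \<Rightarrow> nat \<Rightarrow> nat" where
  "degree_count G d = card {v. v < fst G \<and> degree G v = d}"

text \<open>The colour that 1-WL gives after t rounds to every vertex of a d-regular graph.\<close>
fun regular_colour :: "nat \<Rightarrow> nat \<Rightarrow> unit wlcol" where
  "regular_colour 0 d = Init ()"
| "regular_colour (Suc t) d = Step (regular_colour t d) (replicate_mset d (regular_colour t d))"

lemma regular_colour_Suc_inject:
  "regular_colour (Suc t) d = regular_colour (Suc t) d' \<longleftrightarrow> d = d'"
  by (metis regular_colour.simps(2) size_replicate_mset wlcol.inject(2))

declare regular_colour.simps(2)[simp del]

lemma wl1_round_one: "wl1 G (Suc 0) v = regular_colour (Suc 0) (degree G v)"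
proof -
  have "wl_col (\<lambda>_ _. ()) G 0 = (\<lambda>_. Init ())"
    by (simp add: fun_eq_iff)
  then show ?thesis
    by (simp add: wl1_def degree_def image_mset_const_eq regular_colour.simps(2))
qed

lemma wl1_eq_regular_colour:
  assumes same_degree: "\<And>u v. snd G u v \<Longrightarrow> degree G u = degree G v"
  shows "wl1 G t v = regular_colour t (degree G v)"
proof (induction t arbitrary: v)
  case 0
  then show ?case by (simp add: wl1_def)
next
  case (Suc t)
  let ?N = "{u. u < fst G \<and> snd G v u}"
  have "image_mset (wl1 G t) (mset_set ?N) = image_mset (\<lambda>_. regular_colour t (degree G v)) (mset_set ?N)"
    by (rule image_mset_cong) (auto simp: Suc.IH dest: same_degree)
  then show ?case
    by (simp add: wl1_def Suc.IH[unfolded wl1_def] degree_def image_mset_const_eq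
        regular_colour.simps(2))
qed

lemma col_count_wl1_regular_colour:
  assumes "\<And>v. v < fst G \<Longrightarrow> wl1 G (Suc t) v = regular_colour (Suc t) (degree G v)"
  shows "col_count wl1 G (Suc t) (regular_colour (Suc t) d) = degree_count G d"
  unfolding col_count_def degree_count_def
  by (rule arg_cong[where f = card]) (auto simp: assms regular_colour_Suc_inject)

lemma wl_dist_one_round_if_degree_count_differs:
  assumes "degree_count G d \<noteq> degree_count H d"
  shows "wl_dist_one_round G H"
proof -
  let ?c = "regular_colour (Suc 0) d"
  have "col_count wl1 G (Suc 0) ?c \<noteq> col_count wl1 H (Suc 0) ?c"
    using assms by (simp add: col_count_wl1_regular_colour[OF wl1_round_one])
  then show ?thesis
    unfolding wl_dist_one_round_def by (metis One_nat_def order_refl)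
qed

lemma card_bij_betw_Collect:
  assumes f: "bij_betw f {..<m} {..<n}" and PQ: "\<And>a. a < m \<Longrightarrow> Q (f a) \<longleftrightarrow> P a"
  shows "card {v. v < n \<and> Q v} = card {a. a < m \<and> P a}"
proof -
  have "{v. v < n \<and> Q v} = f ` {a. a < m \<and> P a}"
    using f PQ by (force simp: bij_betw_def)
  moreover have "inj_on f {a. a < m \<and> P a}"
    using f by (auto simp: bij_betw_def intro: inj_on_subset)
  ultimately show ?thesis by (simp add: card_image)
qed

lemma degree_count_graph_iso:
  assumes "graph_iso G H"
  shows "degree_count G d = degree_count H d"
proof -
  obtain f where f: "bij_betw f {..<fst G} {..<fst H}"
    and adj: "\<And>a b. a < fst G \<Longrightarrow> b < fst G \<Longrightarrow> snd G a b \<longleftrightarrow> snd H (f a) (f b)"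
    using assms unfolding graph_iso_def by blast
  have "degree H (f a) = degree G a" if "a < fst G" for a
    unfolding degree_def using that by (intro card_bij_betw_Collect[OF f]) (simp add: adj)
  then show ?thesis
    unfolding degree_count_def by (intro card_bij_betw_Collect[OF f, symmetric]) simp
qed

section \<open>Induced copies of a pattern\<close>

definition triangle :: graph where
  "triangle = (3, \<lambda>u v. u < 3 \<and> v < 3 \<and> u \<noteq> v)"

lemma wf_graph_triangle: "wf_graph triangle"
  by (auto simp: wf_graph_def triangle_def)

lemma in_induced_copy_triangleI:
  assumes "wf_graph G" "a < fst G" "b < fst G" "c < fst G"
    and "snd G a b" "snd G b c" "snd G c a"
  shows "in_induced_copy triangle G a"
proof -
  let ?f = "\<lambda>i::nat. if i = 0 then a else if i = 1 then b else c"
  have three: "{..<3} = {0, 1, 2::nat}"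
    by auto
  have distinct: "a \<noteq> b" "b \<noteq> c" "c \<noteq> a"
    using assms unfolding wf_graph_def by auto
  have sym: "snd G b a" "snd G c b" "snd G a c" and irrefl: "\<not> snd G a a" "\<not> snd G b b" "\<not> snd G c c"
    using assms unfolding wf_graph_def by auto
  have "bij_betw ?f {..<3} {a, b, c}"
    using distinct by (auto simp: bij_betw_def inj_on_def three)
  moreover have "\<forall>i<3. \<forall>j<3. snd triangle i j \<longleftrightarrow> snd G (?f i) (?f j)"
  proof (intro allI impI)
    fix i j :: nat
    assume "i < 3" "j < 3"
    then have "i \<in> {0, 1, 2}" "j \<in> {0, 1, 2}"
      by auto
    then show "snd triangle i j \<longleftrightarrow> snd G (?f i) (?f j)"
      using assms(5-7) sym irrefl by (auto simp: triangle_def)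
  qed
  ultimately show ?thesis
    unfolding in_induced_copy_def using assms(2-4)
    by (intro exI[of _ "{a, b, c}"] conjI exI[of _ ?f]) (auto simp: triangle_def)
qed

lemma in_induced_copy_triangleD:
  assumes "in_induced_copy triangle G v"
  obtains x y where "snd G v x" "snd G x y" "snd G y v"
proof -
  obtain X f where "v \<in> X" and f: "bij_betw f {..<3::nat} X"
    and adj: "\<And>i j. i < 3 \<Longrightarrow> j < 3 \<Longrightarrow> i \<noteq> j \<Longrightarrow> snd G (f i) (f j)"
    using assms unfolding in_induced_copy_def triangle_def by auto
  then obtain i where "i < 3" "v = f i"
    by (auto simp: bij_betw_def)
  moreover have "i \<noteq> (i + 1) mod 3" "(i + 1) mod 3 \<noteq> (i + 2) mod 3" "(i + 2) mod 3 \<noteq> i"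
    using \<open>i < 3\<close> by presburger+
  ultimately show thesis
    using adj[of i "(i + 1) mod 3"] adj[of "(i + 1) mod 3" "(i + 2) mod 3"] adj[of "(i + 2) mod 3" i]
    by (intro that[of "f ((i + 1) mod 3)" "f ((i + 2) mod 3)"]) auto
qed

lemma not_in_induced_copy_triangle_if_parity_bipartite:
  assumes "\<And>u v. snd G u v \<Longrightarrow> odd (u + v)"
  shows "\<not> in_induced_copy triangle G v"
proof
  assume "in_induced_copy triangle G v"
  then obtain x y where "odd (v + x)" "odd (x + y)" "odd (y + v)"
    using assms by (metis in_induced_copy_triangleD)
  then show False by presburger
qed

lemma card_in_induced_copy_ge:
  assumes "in_induced_copy F G v"
  shows "fst F \<le> card {u. u < fst G \<and> in_induced_copy F G u}"
proof -
  obtain X f where "X \<subseteq> {..<fst G}" and f: "bij_betw f {..<fst F} X"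
    and "\<forall>a<fst F. \<forall>b<fst F. snd F a b \<longleftrightarrow> snd G (f a) (f b)"
    using assms unfolding in_induced_copy_def by blast
  then have "X \<subseteq> {u. u < fst G \<and> in_induced_copy F G u}"
    unfolding in_induced_copy_def by blast
  moreover have "card X = fst F"
    using bij_betw_same_card[OF f] by simp
  ultimately show ?thesis
    using card_mono[of "{u. u < fst G \<and> in_induced_copy F G u}" X] by simp
qed

lemma phi_wlF_round_zero:
  "phi (wlF [F]) G (0, Init [1]) = card {v. v < fst G \<and> in_induced_copy F G v}"
  "phi (wlF [F]) G (0, Init [1]) + phi (wlF [F]) G (0, Init [0]) = fst G"
proof -
  have "phi (wlF [F]) G (0, Init [k]) = card {v. v < fst G \<and> (in_induced_copy F G v \<longleftrightarrow> k = 1)}"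
    if "k \<in> {0, 1}" for k
    using that by (auto simp: phi_def col_count_def wlF_def intro: arg_cong[where f = card])
  moreover have "card {v. v < fst G \<and> P v} + card {v. v < fst G \<and> \<not> P v} = fst G" for P
    using card_Int_Diff[of "{..<fst G}" "Collect P"] by (simp add: Int_def set_diff_eq)
  ultimately show
    "phi (wlF [F]) G (0, Init [1]) = card {v. v < fst G \<and> in_induced_copy F G v}"
    "phi (wlF [F]) G (0, Init [1]) + phi (wlF [F]) G (0, Init [0]) = fst G"
    by (simp_all flip: of_nat_add)
qed

lemma wlF_round_zero_sign:
  fixes F G :: graph
  defines "s \<equiv> 3 * phi (wlF [F]) G (0, Init [1]) - phi (wlF [F]) G (0, Init [0])"
  assumes "0 < fst G" and "fst G < 4 * fst F"
  shows "(\<exists>v. in_induced_copy F G v) \<Longrightarrow> s > 0" and "\<not> (\<exists>v. in_induced_copy F G v) \<Longrightarrow> s < 0"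
proof -
  let ?k = "card {v. v < fst G \<and> in_induced_copy F G v}"
  have s: "s = 4 * real ?k - fst G"
    using phi_wlF_round_zero[of F G] unfolding s_def by linarith
  show "s > 0" if "\<exists>v. in_induced_copy F G v"
    using that card_in_induced_copy_ge[of F G] assms(3) unfolding s by force
  show "s < 0" if "\<not> (\<exists>v. in_induced_copy F G v)"
    using that assms(2) unfolding s by simp
qed

definition triangle_label :: "graph \<Rightarrow> nat" where
  "triangle_label G = (if \<exists>v. in_induced_copy triangle G v then 1 else 0)"

section \<open>Linear separability\<close>

lemma not_lin_separable_if_sums_agree:
  assumes sums: "\<And>i. i \<in> I \<Longrightarrow> x a i + x b i = x a' i + x b' i"
    and "a \<in> S" "b \<in> S" "a' \<in> S" "b' \<in> S"
    and "c a = 1" "c b = 1" "c a' = 0" "c b' = 0"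
  shows "\<not> lin_separable I S x c"
proof
  assume "lin_separable I S x c"
  then obtain w r where sep: "\<forall>G\<in>S.
     (c G = 1 \<longrightarrow> (\<Sum>i\<in>I. w i * x G i) + r > 0) \<and> (c G = 0 \<longrightarrow> (\<Sum>i\<in>I. w i * x G i) + r < 0)"
    unfolding lin_separable_def by blast
  have "(\<Sum>i\<in>I. w i * x a i) + (\<Sum>i\<in>I. w i * x b i) = (\<Sum>i\<in>I. w i * x a' i) + (\<Sum>i\<in>I. w i * x b' i)"
    unfolding sum.distrib[symmetric] distrib_left[symmetric] using sums by simp
  moreover have "(\<Sum>i\<in>I. w i * x a i) + r > 0" "(\<Sum>i\<in>I. w i * x b i) + r > 0"
    "(\<Sum>i\<in>I. w i * x a' i) + r < 0" "(\<Sum>i\<in>I. w i * x b' i) + r < 0"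
    using sep assms(2-9) by auto
  ultimately show False by linarith
qed

lemma not_lin_separable_normalise_if_sums_agree:
  assumes sums: "\<And>i. i \<in> I \<Longrightarrow> x a i + x b i = x a' i + x b' i"
    and norms: "\<And>G. G \<in> {a, b, a', b'} \<Longrightarrow> (\<Sum>i\<in>I. (x G i)\<^sup>2) = r"
    and "a \<in> S" "b \<in> S" "a' \<in> S" "b' \<in> S"
    and "c a = 1" "c b = 1" "c a' = 0" "c b' = 0"
  shows "\<not> lin_separable I S (\<lambda>G. normalise I (x G)) c"
proof (rule not_lin_separable_if_sums_agree[OF _ assms(3-)])
  fix i assume "i \<in> I"
  then show "normalise I (x a) i + normalise I (x b) i = normalise I (x a') i + normalise I (x b') i"
    using sums norms by (simp add: normalise_def add_divide_distrib[symmetric])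
qed

text \<open>A hyperplane through the origin still separates after each sample point is rescaled by a
  positive factor, in particular after normalisation.\<close>
lemma lin_separable_through_origin:
  assumes sep: "\<And>G. G \<in> S \<Longrightarrow> (c G = 1 \<longrightarrow> (\<Sum>i\<in>I. w i * x G i) > 0) \<and> (c G = 0 \<longrightarrow> (\<Sum>i\<in>I. w i * x G i) < 0)"
  shows "lin_separable I S x c" and "lin_separable I S (\<lambda>G. normalise I (x G)) c"
proof -
  show "lin_separable I S x c"
    unfolding lin_separable_def using sep by (intro exI[of _ w] exI[of _ 0]) simp
  have "(\<Sum>i\<in>I. w i * normalise I (x G) i) = (\<Sum>i\<in>I. w i * x G i) / sqrt (\<Sum>i\<in>I. (x G i)\<^sup>2)" for G
    by (simp add: normalise_def sum_divide_distrib)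
  moreover have "sqrt (\<Sum>i\<in>I. (x G i)\<^sup>2) > 0" if "(\<Sum>i\<in>I. w i * x G i) \<noteq> 0" for G
  proof -
    from that obtain j where "finite I" "j \<in> I" "x G j \<noteq> 0"
      by (metis (no_types, lifting) mult_zero_right sum.infinite sum.neutral)
    then have "(\<Sum>i\<in>I. (x G i)\<^sup>2) > 0"
      by (intro sum_pos2[of _ j]) auto
    then show ?thesis by simp
  qed
  ultimately show "lin_separable I S (\<lambda>G. normalise I (x G)) c"
    unfolding lin_separable_def using sep
    by (intro exI[of _ w] exI[of _ 0]) (fastforce simp: divide_pos_pos divide_neg_pos)
qed

lemma sum_two_point_weights:
  fixes y :: "'i \<Rightarrow> real"
  assumes "finite I" "a \<in> I" "b \<in> I"
  shows "(\<Sum>i\<in>I. ((if i = a then p else 0) - (if i = b then q else 0)) * y i) = p * y a - q * y b"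
proof -
  have "(\<Sum>i\<in>I. ((if i = a then p else 0) - (if i = b then q else 0)) * y i)
      = (\<Sum>i\<in>I. if i = a then p * y i else 0) - (\<Sum>i\<in>I. if i = b then q * y i else 0)"
    unfolding sum_subtractf[symmetric] by (rule sum.cong) (auto simp: left_diff_distrib)
  then show ?thesis
    using assms by simp
qed

lemma colours_atI: "G \<in> S \<Longrightarrow> v < fst G \<Longrightarrow> col G t v \<in> colours_at col S t"
  unfolding colours_at_def by blast

lemma feat_idxI: "t \<le> T \<Longrightarrow> G \<in> S \<Longrightarrow> v < fst G \<Longrightarrow> (t, col G t v) \<in> feat_idx col S T"
  unfolding feat_idx_def by (simp add: colours_atI)

lemma finite_feat_idx: "finite S \<Longrightarrow> finite (feat_idx col S T)"
proof -
  assume "finite S"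
  moreover have "colours_at col S t = (\<lambda>(G, v). col G t v) ` (SIGMA G:S. {..<fst G})" for t
    unfolding colours_at_def by force
  moreover have "feat_idx col S T = Sigma {..T} (colours_at col S)"
    unfolding feat_idx_def by auto
  ultimately show ?thesis by simp
qed

definition edges_graph :: "nat \<Rightarrow> (nat \<times> nat) list \<Rightarrow> graph" where
  "edges_graph k es = (k, \<lambda>u v. (u, v) \<in> set es \<or> (v, u) \<in> set es)"

definition matching_triangle :: graph where
  "matching_triangle = edges_graph 9 [(0, 1), (2, 3), (4, 5), (6, 7), (7, 8), (8, 6)]"

definition isolated_triangle :: graph where
  "isolated_triangle = edges_graph 9 [(6, 7), (7, 8), (8, 6)]"

definition isolated_hexagon :: graph where
  "isolated_hexagon = edges_graph 9 [(3, 4), (4, 5), (5, 6), (6, 7), (7, 8), (8, 3)]"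

definition isolated_matching :: graph where
  "isolated_matching = edges_graph 9 [(3, 4), (5, 6), (7, 8)]"

definition sample :: "graph set" where
  "sample = {matching_triangle, isolated_triangle, isolated_hexagon, isolated_matching}"

lemmas sample_graph_defs =
  matching_triangle_def isolated_triangle_def isolated_hexagon_def isolated_matching_def

lemma Collect_less_9: "{u. u < (9::nat) \<and> P u} = set (filter P [0..<9])"
  by auto

lemma degree_sample:
  "v < 9 \<Longrightarrow> degree matching_triangle v = (if v < 6 then 1 else 2)"
  "v < 9 \<Longrightarrow> degree isolated_triangle v = (if v < 6 then 0 else 2)"
  "v < 9 \<Longrightarrow> degree isolated_hexagon v = (if v < 3 then 0 else 2)"
  "v < 9 \<Longrightarrow> degree isolated_matching v = (if v < 3 then 0 else 1)"
  by (auto simp: degree_def sample_graph_defs edges_graph_def Collect_less_9 upt_rec less_Suc_eq)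

lemma wf_graph_sample: "G \<in> sample \<Longrightarrow> wf_graph G \<and> fst G = 9"
  by (auto simp: sample_def sample_graph_defs edges_graph_def wf_graph_def)

lemma degree_sample_range: "G \<in> sample \<Longrightarrow> v < 9 \<Longrightarrow> degree G v \<in> {0, 1, 2}"
  by (auto simp: sample_def degree_sample split: if_splits)

lemma adjacent_sample_blocks:
  "snd matching_triangle u v \<Longrightarrow> u < 9 \<and> v < 9 \<and> (u < 6 \<longleftrightarrow> v < 6)"
  "snd isolated_triangle u v \<Longrightarrow> u < 9 \<and> v < 9 \<and> (u < 6 \<longleftrightarrow> v < 6)"
  "snd isolated_hexagon u v \<Longrightarrow> u < 9 \<and> v < 9 \<and> (u < 3 \<longleftrightarrow> v < 3)"
  "snd isolated_matching u v \<Longrightarrow> u < 9 \<and> v < 9 \<and> (u < 3 \<longleftrightarrow> v < 3)"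
  by (auto simp: sample_graph_defs edges_graph_def)

lemma sample_adjacent_same_degree: "G \<in> sample \<Longrightarrow> snd G u v \<Longrightarrow> degree G u = degree G v"
  unfolding sample_def by (auto dest!: adjacent_sample_blocks simp: degree_sample)

lemma degree_count_sample:
  "map (degree_count matching_triangle) [0, 1, 2] = [0, 6, 3]"
  "map (degree_count isolated_triangle) [0, 1, 2] = [6, 0, 3]"
  "map (degree_count isolated_hexagon) [0, 1, 2] = [3, 0, 6]"
  "map (degree_count isolated_matching) [0, 1, 2] = [3, 6, 0]"
  using wf_graph_sample
  by (simp_all add: sample_def degree_count_def degree_sample Collect_less_9 upt_rec)

lemma sample_degree_counts_differ:
  assumes "G \<in> sample" "H \<in> sample" "G \<noteq> H"
  shows "\<exists>d. degree_count G d \<noteq> degree_count H d"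
proof -
  have "map (degree_count G) [0, 1, 2] \<noteq> map (degree_count H) [0, 1, 2]"
    using assms unfolding sample_def by (auto simp: degree_count_sample[simplified])
  then show ?thesis
    by auto
qed

lemma wl1_sample: "G \<in> sample \<Longrightarrow> wl1 G t v = regular_colour t (degree G v)"
  by (rule wl1_eq_regular_colour) (rule sample_adjacent_same_degree)

lemma phi_wl1_sample:
  assumes "G \<in> sample"
  shows "phi wl1 G (t, regular_colour t d) = (if t = 0 then 9 else degree_count G d)"
proof (cases t)
  case 0
  then show ?thesis
    using wf_graph_sample[OF assms] by (simp add: phi_def col_count_def wl1_sample[OF assms])
next
  case (Suc s)
  then show ?thesis
    using wl1_sample[OF assms] by (simp add: phi_def col_count_wl1_regular_colour)
qed

lemma colours_at_wl1_sample: "colours_at wl1 sample t = regular_colour t ` {0, 1, 2}"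
proof
  show "colours_at wl1 sample t \<subseteq> regular_colour t ` {0, 1, 2}"
  proof
    fix c
    assume "c \<in> colours_at wl1 sample t"
    then obtain G v where G: "G \<in> sample" and "v < fst G" "c = wl1 G t v"
      unfolding colours_at_def by blast
    then have "degree G v \<in> {0, 1, 2}" "c = regular_colour t (degree G v)"
      using degree_sample_range wf_graph_sample wl1_sample by simp_all
    then show "c \<in> regular_colour t ` {0, 1, 2}"
      by blast
  qed
  have "regular_colour t (degree G v) \<in> colours_at wl1 sample t" if "G \<in> sample" "v < 9" for G v
  proof -
    have "v < fst G"
      using that wf_graph_sample by simp
    then have "wl1 G t v \<in> colours_at wl1 sample t"
      using that(1) unfolding colours_at_def by blast
    then show ?thesis
      using wl1_sample[OF that(1)] by simp
  qed
  from this[of isolated_triangle 0] this[of matching_triangle 0] this[of matching_triangle 6]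
  show "regular_colour t ` {0, 1, 2} \<subseteq> colours_at wl1 sample t"
    by (simp add: sample_def degree_sample)
qed

lemma feat_idx_wl1_sample: "feat_idx wl1 sample T = (SIGMA t:{..T}. regular_colour t ` {0, 1, 2})"
  by (auto simp: feat_idx_def colours_at_wl1_sample)

lemma phi_wl1_sample_sums_agree:
  assumes "i \<in> feat_idx wl1 sample T"
  shows "phi wl1 matching_triangle i + phi wl1 isolated_triangle i
       = phi wl1 isolated_hexagon i + phi wl1 isolated_matching i"
proof -
  obtain t d where "i = (t, regular_colour t d)" "d \<in> {0, 1, 2}"
    using assms by (auto simp: feat_idx_wl1_sample)
  then show ?thesis
    using degree_count_sample by (auto simp: phi_wl1_sample sample_def)
qed

lemma sum_squares_phi_wl1_sample:
  assumes "G \<in> sample"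
  shows "(\<Sum>i\<in>feat_idx wl1 sample T. (phi wl1 G i)\<^sup>2) = (\<Sum>t\<le>T. if t = 0 then 81 else 45)"
proof -
  have round_sum: "(\<Sum>c\<in>regular_colour t ` {0, 1, 2}. (phi wl1 G (t, c))\<^sup>2) = (if t = 0 then 81 else 45)"
    for t
  proof (cases t)
    case 0
    then show ?thesis using phi_wl1_sample[OF assms, of 0] by simp
  next
    case (Suc s)
    then have "inj_on (regular_colour t) {0, 1, 2}"
      by (simp add: inj_on_def regular_colour_Suc_inject)
    then show ?thesis
      using Suc assms degree_count_sample
      by (simp add: sum.reindex phi_wl1_sample) (auto simp: sample_def)
  qed
  have "(\<Sum>i\<in>feat_idx wl1 sample T. (phi wl1 G i)\<^sup>2)
      = (\<Sum>t\<le>T. \<Sum>c\<in>regular_colour t ` {0, 1, 2}. (phi wl1 G (t, c))\<^sup>2)"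
    unfolding feat_idx_wl1_sample by (subst sum.Sigma) (simp_all add: case_prod_unfold)
  also have "\<dots> = (\<Sum>t\<le>T. if t = 0 then 81 else 45)"
    by (rule sum.cong[OF refl round_sum])
  finally show ?thesis .
qed

lemma triangle_copies_sample:
  "in_induced_copy triangle matching_triangle 6"
  "in_induced_copy triangle isolated_triangle 6"
  "\<not> in_induced_copy triangle isolated_hexagon v"
  "\<not> in_induced_copy triangle isolated_matching v"
proof -
  have wf: "wf_graph matching_triangle" "wf_graph isolated_triangle"
    using wf_graph_sample by (simp_all add: sample_def)
  show "in_induced_copy triangle matching_triangle 6"
    by (rule in_induced_copy_triangleI[OF wf(1), where b = 7 and c = 8])
      (simp_all add: matching_triangle_def edges_graph_def)
  show "in_induced_copy triangle isolated_triangle 6"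
    by (rule in_induced_copy_triangleI[OF wf(2), where b = 7 and c = 8])
      (simp_all add: isolated_triangle_def edges_graph_def)
  show "\<not> in_induced_copy triangle isolated_hexagon v" "\<not> in_induced_copy triangle isolated_matching v"
    by (auto intro!: not_in_induced_copy_triangle_if_parity_bipartite
        simp: isolated_hexagon_def isolated_matching_def edges_graph_def)
qed

lemma triangle_label_sample:
  "triangle_label matching_triangle = 1" "triangle_label isolated_triangle = 1"
  "triangle_label isolated_hexagon = 0" "triangle_label isolated_matching = 0"
  using triangle_copies_sample unfolding triangle_label_def by auto

lemma lin_separable_wlF_triangle_sample:
  fixes T :: nat
  defines "I \<equiv> feat_idx (wlF [triangle]) sample T"
  shows "lin_separable I sample (phi (wlF [triangle])) triangle_label"
    and "lin_separable I sample (\<lambda>G. normalise I (phi (wlF [triangle]) G)) triangle_label"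
proof -
  let ?a = "(0, Init [1])" and ?b = "(0, Init [0])"
  have "wlF [triangle] matching_triangle 0 6 = Init [1]" "wlF [triangle] isolated_hexagon 0 0 = Init [0]"
    using triangle_copies_sample by (simp_all add: wlF_def)
  then have a: "?a \<in> I" and b: "?b \<in> I"
    using feat_idxI[of 0 T matching_triangle sample 6 "wlF [triangle]"]
      feat_idxI[of 0 T isolated_hexagon sample 0 "wlF [triangle]"] wf_graph_sample
    by (simp_all add: I_def sample_def)
  have fin: "finite I"
    unfolding I_def by (rule finite_feat_idx) (simp add: sample_def)
  have "(\<Sum>i\<in>I. ((if i = ?a then 3 else 0) - (if i = ?b then 1 else 0)) * phi (wlF [triangle]) G i)
      = 3 * phi (wlF [triangle]) G ?a - phi (wlF [triangle]) G ?b" for G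
    using sum_two_point_weights[OF fin a b, of 3 1] by simp
  moreover have "fst G = 9" if "G \<in> sample" for G
    using that wf_graph_sample by simp
  ultimately have sign: "(triangle_label G = 1 \<longrightarrow>
        (\<Sum>i\<in>I. ((if i = ?a then 3 else 0) - (if i = ?b then 1 else 0)) * phi (wlF [triangle]) G i) > 0)
      \<and> (triangle_label G = 0 \<longrightarrow>
        (\<Sum>i\<in>I. ((if i = ?a then 3 else 0) - (if i = ?b then 1 else 0)) * phi (wlF [triangle]) G i) < 0)"
    if "G \<in> sample" for G
    using that wlF_round_zero_sign[of G triangle] by (simp add: triangle_label_def triangle_def)
  show "lin_separable I sample (phi (wlF [triangle])) triangle_label"
    by (rule lin_separable_through_origin(1), rule sign)
  show "lin_separable I sample (\<lambda>G. normalise I (phi (wlF [triangle]) G)) triangle_label"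
    by (rule lin_separable_through_origin(2), rule sign)
qed

lemma not_lin_separable_wl1_sample:
  fixes T :: nat
  defines "I \<equiv> feat_idx wl1 sample T"
  shows "\<not> lin_separable I sample (phi wl1) triangle_label"
    and "\<not> lin_separable I sample (\<lambda>G. normalise I (phi wl1 G)) triangle_label"
proof -
  have members: "matching_triangle \<in> sample" "isolated_triangle \<in> sample"
    "isolated_hexagon \<in> sample" "isolated_matching \<in> sample"
    by (simp_all add: sample_def)
  show "\<not> lin_separable I sample (phi wl1) triangle_label"
    unfolding I_def
    by (rule not_lin_separable_if_sums_agree[OF phi_wl1_sample_sums_agree members triangle_label_sample])
  show "\<not> lin_separable I sample (\<lambda>G. normalise I (phi wl1 G)) triangle_label"
    unfolding I_def
    by (rule not_lin_separable_normalise_if_sums_agree[OF phi_wl1_sample_sums_agree _ members triangle_label_sample])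
      (auto simp: sum_squares_phi_wl1_sample members)
qed

theorem proposition12:
  fixes n :: nat
  assumes "n \<ge> 10"
  shows "\<exists>(S :: graph set) (c :: graph \<Rightarrow> nat) (F :: graph).
    finite S \<and> (\<forall>G\<in>S. wf_graph G \<and> fst G \<le> n) \<and>
    (\<forall>G\<in>S. \<forall>H\<in>S. G \<noteq> H \<longrightarrow> \<not> graph_iso G H) \<and>
    (\<forall>G\<in>S. c G \<in> {0, 1}) \<and> wf_graph F \<and>
    (\<forall>G\<in>S. \<forall>H\<in>S. G \<noteq> H \<longrightarrow> wl_dist_one_round G H) \<and>
    (\<forall>T. \<not> lin_separable (feat_idx wl1 S T) S
          (\<lambda>G. normalise (feat_idx wl1 S T) (phi wl1 G)) c) \<and>
    (\<forall>T. lin_separable (feat_idx (wlF [F]) S T) S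
          (\<lambda>G. normalise (feat_idx (wlF [F]) S T) (phi (wlF [F]) G)) c) \<and>
    (\<forall>T. \<not> lin_separable (feat_idx wl1 S T) S (phi wl1) c) \<and>
    (\<forall>T. lin_separable (feat_idx (wlF [F]) S T) S (phi (wlF [F])) c)"
proof -
  have "finite sample"
    by (simp add: sample_def)
  moreover have "\<forall>G\<in>sample. wf_graph G \<and> fst G \<le> n"
    using wf_graph_sample assms by auto
  moreover have "\<forall>G\<in>sample. \<forall>H\<in>sample. G \<noteq> H \<longrightarrow> \<not> graph_iso G H"
    using sample_degree_counts_differ degree_count_graph_iso by metis
  moreover have "\<forall>G\<in>sample. triangle_label G \<in> {0, 1}"
    by (simp add: triangle_label_def)
  moreover have "\<forall>G\<in>sample. \<forall>H\<in>sample. G \<noteq> H \<longrightarrow> wl_dist_one_round G H"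
    using sample_degree_counts_differ wl_dist_one_round_if_degree_count_differs by metis
  ultimately show ?thesis
    using wf_graph_triangle lin_separable_wlF_triangle_sample not_lin_separable_wl1_sample
    by (intro exI[of _ sample] exI[of _ triangle_label] exI[of _ triangle]) blast
qed

end
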